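(* Let $N\ge1$, $c\in\mathbb{R}$, and consider the manifold of Jacobi parameters $a_1,\dots,a_{N-1}>0$, $b_1,\dots,b_N\in\mathbb{R}$ with $\sum_jb_j=c$, with the Poisson bracket described in the context. For $1\le n\le N$ let $P_n,Q_n$ be as in the context and $m_n(x)=-Q_n(x)/P_n(x)$. Then (wherever $P_n(y)\neq0$) \[ \{P_n(x),m_n(y)\}=\tfrac12\Bigl[Q_n(x)m_n(y)-\frac{P_n(x)m_n(y)+Q_n(x)}{x-y}\Bigr], \] \[ \{Q_n(x),m_n(y)\}=\tfrac12\Bigl[-Q_n(x)m_n(y)^2+m_n(y)\frac{P_n(x)m_n(y)+Q_n(x)}{x-y}\Bigr]. \]
   Context: The Poisson bracket is the bilinear antisymmetric bracket satisfying the Leibniz rule whose only nonzero brackets among the coordinates are $\{b_k,a_k\}=-\tfrac14 a_k$ ($k=1,\dots,N-1$) and $\{b_k,a_{k-1}\}=\tfrac14 a_{k-1}$ ($k=2,\dots,N$); auxiliary variables $x,y$ are held fixed. With $J(b_1,\dots,b_m;a_1,\dots,a_{m-1})$ the $m\times m$ tridiagonal symmetric matrix with diagonal $b_1,\dots,b_m$ and off-diagonal entries $a_1,\dots,a_{m-1}$: $P_n(x)=\det(x-J(b_1,\dots,b_n;a_1,\dots,a_{n-1}))$ and $Q_n(x)=\det(x-J(b_2,\dots,b_n;a_2,\dots,a_{n-1}))$. *)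

theory Defs
  imports Complex_Main "HOL-Analysis.Derivative" "Jordan_Normal_Form.Determinant"
begin

text \<open>Points of phase space: a :: nat => real (a 1 .. a (N-1)) and b :: nat => real (b 1 .. b N).
  Observables are functions F a b.\<close>

definition jacobi_mat :: "(nat \<Rightarrow> real) \<Rightarrow> (nat \<Rightarrow> real) \<Rightarrow> nat \<Rightarrow> nat \<Rightarrow> real mat" where
  "jacobi_mat a b s n = mat (Suc n - s) (Suc n - s) (\<lambda>(i,j).
      if i = j then b (s + i)
      else if j = i + 1 then a (s + i)
      else if i = j + 1 then a (s + j)
      else 0)"

definition charpoly_at :: "(nat \<Rightarrow> real) \<Rightarrow> (nat \<Rightarrow> real) \<Rightarrow> nat \<Rightarrow> nat \<Rightarrow> real \<Rightarrow> real" where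
  "charpoly_at a b s n x =
     det (x \<cdot>\<^sub>m 1\<^sub>m (Suc n - s) - jacobi_mat a b s n)"

definition Pn :: "nat \<Rightarrow> (nat \<Rightarrow> real) \<Rightarrow> (nat \<Rightarrow> real) \<Rightarrow> real \<Rightarrow> real" where
  "Pn n a b x = charpoly_at a b 1 n x"

definition Qn :: "nat \<Rightarrow> (nat \<Rightarrow> real) \<Rightarrow> (nat \<Rightarrow> real) \<Rightarrow> real \<Rightarrow> real" where
  "Qn n a b x = charpoly_at a b 2 n x"

definition mn :: "nat \<Rightarrow> (nat \<Rightarrow> real) \<Rightarrow> (nat \<Rightarrow> real) \<Rightarrow> real \<Rightarrow> real" where
  "mn n a b y = - Qn n a b y / Pn n a b y"

definition da :: "((nat \<Rightarrow> real) \<Rightarrow> (nat \<Rightarrow> real) \<Rightarrow> real) \<Rightarrow> nat \<Rightarrow> (nat \<Rightarrow> real) \<Rightarrow> (nat \<Rightarrow> real) \<Rightarrow> real" where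
  "da F k a b = deriv (\<lambda>t. F (a(k := t)) b) (a k)"

definition db :: "((nat \<Rightarrow> real) \<Rightarrow> (nat \<Rightarrow> real) \<Rightarrow> real) \<Rightarrow> nat \<Rightarrow> (nat \<Rightarrow> real) \<Rightarrow> (nat \<Rightarrow> real) \<Rightarrow> real" where
  "db F k a b = deriv (\<lambda>t. F a (b(k := t))) (b k)"

text \<open>The Poisson bracket: the unique bilinear antisymmetric Leibniz bracket with
  {b_k,a_k} = -a_k/4 (k=1..N-1), {b_k,a_(k-1)} = a_(k-1)/4 (k=2..N), others zero,
  written via partial derivatives: {F,G} = sum_{u,v} dF/du dG/dv {u,v}.\<close>
definition poisson :: "nat \<Rightarrow> ((nat \<Rightarrow> real) \<Rightarrow> (nat \<Rightarrow> real) \<Rightarrow> real) \<Rightarrow>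
    ((nat \<Rightarrow> real) \<Rightarrow> (nat \<Rightarrow> real) \<Rightarrow> real) \<Rightarrow> (nat \<Rightarrow> real) \<Rightarrow> (nat \<Rightarrow> real) \<Rightarrow> real" where
  "poisson N F G a b =
     (\<Sum>k=1..N-1. (- a k / 4) * (db F k a b * da G k a b - da F k a b * db G k a b))
   + (\<Sum>k=2..N. (a (k-1) / 4) * (db F k a b * da G (k-1) a b - da F (k-1) a b * db G k a b))"

end

theory Submission
  imports Defs
begin

(* Write C_s(x) for the characteristic polynomial of the trailing block J(b_s..b_n; a_s..a_(n-1)),
   so that P_n = C_1 and Q_n = C_2; expanding along the first row gives
   C_s = (x - b_s) C_(s+1) - a_s^2 C_(s+2). The bracket couples a_s only with b_s and b_(s+1), and
   C_(s+1), C_(s+2) involve neither a_s nor b_s. Hence the Leibniz rule and the recurrence give, by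
   descending induction on s, that {C_s(x), C_s(y)} = 0 and
     {C_s(x), C_(s+1)(y)}
       = 1/2 [C_(s+1)(x) C_(s+1)(y) + (C_(s+1)(x) C_s(y) - C_s(x) C_(s+1)(y)) / (x - y)].
   At s = 1 these are the brackets among P_n and Q_n, and the quotient rule for m_n = -Q_n/P_n
   finishes the proof. Everything is a polynomial identity in the a_k and b_k. *)

definition tridiag_char_mat ::
    "(nat \<Rightarrow> real) \<Rightarrow> (nat \<Rightarrow> real) \<Rightarrow> nat \<Rightarrow> nat \<Rightarrow> real \<Rightarrow> real mat" where
  "tridiag_char_mat a b s m x = mat m m (\<lambda>(i,j).
      if i = j then x - b (s + i)
      else if j = i + 1 then - a (s + i)
      else if i = j + 1 then - a (s + j)
      else 0)"

lemma charpoly_at_eq_det: "charpoly_at a b s n x = det (tridiag_char_mat a b s (Suc n - s) x)"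
  unfolding charpoly_at_def jacobi_mat_def tridiag_char_mat_def
  by (rule arg_cong[where f=det], rule eq_matI, auto)

lemma tridiag_char_mat_carrier: "tridiag_char_mat a b s m x \<in> carrier_mat m m"
  unfolding tridiag_char_mat_def by auto

lemma det_tridiag_char_mat_Suc_Suc:
  "det (tridiag_char_mat a b s (Suc (Suc m)) x) =
     (x - b s) * det (tridiag_char_mat a b (Suc s) (Suc m) x)
     - a s * a s * det (tridiag_char_mat a b (Suc (Suc s)) m x)"
proof -
  let ?M = "tridiag_char_mat a b s (Suc (Suc m)) x"
  let ?D = "mat_delete ?M 0 (Suc 0)"
  have D_carrier: "?D \<in> carrier_mat (Suc m) (Suc m)"
    using mat_delete_carrier[OF tridiag_char_mat_carrier[of a b s "Suc (Suc m)" x]] by simp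
  have minor_M: "mat_delete ?M 0 0 = tridiag_char_mat a b (Suc s) (Suc m) x"
    unfolding tridiag_char_mat_def mat_delete_def by (rule eq_matI) auto
  have minor_D: "mat_delete ?D 0 0 = tridiag_char_mat a b (Suc (Suc s)) m x"
    unfolding tridiag_char_mat_def mat_delete_def by (rule eq_matI) auto
  have "det ?D = (\<Sum>i<Suc m. ?D $$ (i,0) * cofactor ?D i 0)"
    by (rule laplace_expansion_column[OF D_carrier]) simp
  also have "\<dots> = (\<Sum>i\<in>{0}. ?D $$ (i,0) * cofactor ?D i 0)"
    by (rule sum.mono_neutral_right) (auto simp: tridiag_char_mat_def mat_delete_def)
  finally have det_D: "det ?D = - a s * det (tridiag_char_mat a b (Suc (Suc s)) m x)"
    by (simp add: cofactor_def minor_D) (simp add: tridiag_char_mat_def mat_delete_def)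
  have "det ?M = (\<Sum>j<Suc (Suc m). ?M $$ (0,j) * cofactor ?M 0 j)"
    by (rule laplace_expansion_row[OF tridiag_char_mat_carrier]) simp
  also have "\<dots> = (\<Sum>j\<in>{0,1}. ?M $$ (0,j) * cofactor ?M 0 j)"
    by (rule sum.mono_neutral_right) (auto simp: tridiag_char_mat_def)
  finally show ?thesis
    using det_D by (simp add: cofactor_def minor_M) (simp add: tridiag_char_mat_def)
qed

lemma charpoly_at_above: "n < s \<Longrightarrow> charpoly_at a b s n x = 1"
  unfolding charpoly_at_eq_det by (rule det_dim_zero) (simp add: tridiag_char_mat_def)

lemma charpoly_at_diag: "charpoly_at a b n n x = x - b n"
  unfolding charpoly_at_eq_det by (subst det_single) (auto simp: tridiag_char_mat_def)

lemma charpoly_at_rec: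
  assumes "s < n"
  shows "charpoly_at a b s n x =
    (x - b s) * charpoly_at a b (Suc s) n x - a s * a s * charpoly_at a b (Suc (Suc s)) n x"
proof -
  obtain m where m: "Suc n - s = Suc (Suc m)"
    using assms by (metis Suc_diff_Suc Suc_diff_le less_imp_le_nat Suc_leI)
  then have "Suc n - Suc s = Suc m" "Suc n - Suc (Suc s) = m" by auto
  with m show ?thesis unfolding charpoly_at_eq_det by (simp add: det_tridiag_char_mat_Suc_Suc)
qed

lemma charpoly_at_cong:
  assumes "\<And>j. s \<le> j \<Longrightarrow> a j = a' j \<and> b j = b' j"
  shows "charpoly_at a b s n x = charpoly_at a' b' s n x"
proof -
  have "tridiag_char_mat a b s m x = tridiag_char_mat a' b' s m x" for m
    unfolding tridiag_char_mat_def using assms by (intro arg_cong[where f="mat m m"]) (auto simp: fun_eq_iff)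
  then show ?thesis unfolding charpoly_at_eq_det by simp
qed

type_synonym observable = "(nat \<Rightarrow> real) \<Rightarrow> (nat \<Rightarrow> real) \<Rightarrow> real"

(* da and db are defined via deriv, which is an arbitrary value where no derivative exists. *)
definition partially_differentiable :: "observable \<Rightarrow> bool" where
  "partially_differentiable F \<longleftrightarrow>
     (\<forall>k a b. (\<lambda>t. F (a(k := t)) b) differentiable at (a k)) \<and>
     (\<forall>k a b. (\<lambda>t. F a (b(k := t))) differentiable at (b k))"

lemma has_real_derivative_da:
  "partially_differentiable F \<Longrightarrow> ((\<lambda>t. F (a(k := t)) b) has_real_derivative da F k a b) (at (a k))"
  unfolding partially_differentiable_def da_def by (simp add: DERIV_deriv_iff_real_differentiable)

lemma has_real_derivative_db:
  "partially_differentiable F \<Longrightarrow> ((\<lambda>t. F a (b(k := t))) has_real_derivative db F k a b) (at (b k))"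
  unfolding partially_differentiable_def db_def by (simp add: DERIV_deriv_iff_real_differentiable)

lemma partially_differentiable_const [simp]: "partially_differentiable (\<lambda>a b. c)"
  by (simp add: partially_differentiable_def)

lemma has_real_derivative_fun_upd_apply:
  "((\<lambda>t. (f(k := t)) j) has_real_derivative (if k = j then 1 else 0)) (at z)"
  by (cases "k = j") auto

lemma partially_differentiable_coord_a [simp]: "partially_differentiable (\<lambda>a b. a j)"
  unfolding partially_differentiable_def real_differentiable_def
  using has_real_derivative_fun_upd_apply DERIV_const by (metis (no_types))

lemma partially_differentiable_coord_b [simp]: "partially_differentiable (\<lambda>a b. b j)"
  unfolding partially_differentiable_def real_differentiable_def
  using has_real_derivative_fun_upd_apply DERIV_const by (metis (no_types))

lemma partially_differentiable_minus [simp]: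
  "partially_differentiable F \<Longrightarrow> partially_differentiable (\<lambda>a b. - F a b)"
  by (simp add: partially_differentiable_def)

lemma partially_differentiable_diff [simp]:
  "partially_differentiable F \<Longrightarrow> partially_differentiable G \<Longrightarrow>
     partially_differentiable (\<lambda>a b. F a b - G a b)"
  by (simp add: partially_differentiable_def)

lemma partially_differentiable_mult [simp]:
  "partially_differentiable F \<Longrightarrow> partially_differentiable G \<Longrightarrow>
     partially_differentiable (\<lambda>a b. F a b * G a b)"
  by (simp add: partially_differentiable_def)

lemma da_const [simp]: "da (\<lambda>a b. c) k a b = 0"
  by (simp add: da_def)

lemma db_const [simp]: "db (\<lambda>a b. c) k a b = 0"
  by (simp add: db_def)

lemma da_coord_a [simp]: "da (\<lambda>a b. a j) k a b = (if k = j then 1 else 0)"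
  unfolding da_def by (rule DERIV_imp_deriv, rule has_real_derivative_fun_upd_apply)

lemma db_coord_b [simp]: "db (\<lambda>a b. b j) k a b = (if k = j then 1 else 0)"
  unfolding db_def by (rule DERIV_imp_deriv, rule has_real_derivative_fun_upd_apply)

lemma da_coord_b [simp]: "da (\<lambda>a b. b j) k a b = 0"
  by (simp add: da_def)

lemma db_coord_a [simp]: "db (\<lambda>a b. a j) k a b = 0"
  by (simp add: db_def)

lemma da_minus [simp]:
  "partially_differentiable F \<Longrightarrow> da (\<lambda>a b. - F a b) k a b = - da F k a b"
  unfolding da_def [of "\<lambda>a b. - F a b"]
  by (intro DERIV_imp_deriv DERIV_minus has_real_derivative_da)

lemma db_minus [simp]:
  "partially_differentiable F \<Longrightarrow> db (\<lambda>a b. - F a b) k a b = - db F k a b"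
  unfolding db_def [of "\<lambda>a b. - F a b"]
  by (intro DERIV_imp_deriv DERIV_minus has_real_derivative_db)

lemma da_diff [simp]:
  "partially_differentiable F \<Longrightarrow> partially_differentiable G \<Longrightarrow>
     da (\<lambda>a b. F a b - G a b) k a b = da F k a b - da G k a b"
  unfolding da_def [of "\<lambda>a b. F a b - G a b"]
  by (intro DERIV_imp_deriv DERIV_diff has_real_derivative_da)

lemma db_diff [simp]:
  "partially_differentiable F \<Longrightarrow> partially_differentiable G \<Longrightarrow>
     db (\<lambda>a b. F a b - G a b) k a b = db F k a b - db G k a b"
  unfolding db_def [of "\<lambda>a b. F a b - G a b"]
  by (intro DERIV_imp_deriv DERIV_diff has_real_derivative_db)

lemma da_mult [simp]:
  assumes "partially_differentiable F" "partially_differentiable G"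
  shows "da (\<lambda>a b. F a b * G a b) k a b = da F k a b * G a b + da G k a b * F a b"
  unfolding da_def [of "\<lambda>a b. F a b * G a b"]
  using DERIV_mult [OF has_real_derivative_da [OF assms(1), of a k b]
      has_real_derivative_da [OF assms(2), of a k b]]
  by (intro DERIV_imp_deriv) simp

lemma db_mult [simp]:
  assumes "partially_differentiable F" "partially_differentiable G"
  shows "db (\<lambda>a b. F a b * G a b) k a b = db F k a b * G a b + db G k a b * F a b"
  unfolding db_def [of "\<lambda>a b. F a b * G a b"]
  using DERIV_mult [OF has_real_derivative_db [OF assms(1), of a b k]
      has_real_derivative_db [OF assms(2), of a b k]]
  by (intro DERIV_imp_deriv) simp

lemma poisson_antisym: "poisson N G F a b = - poisson N F G a b"
  unfolding poisson_def by (simp add: algebra_simps sum.distrib [symmetric] sum_negf [symmetric])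

lemma poisson_self: "poisson N F F a b = 0"
  using poisson_antisym [of N F F a b] by simp

lemma poisson_left_lincomb:
  assumes "\<And>k. da F k a b = u * da G k a b + v * da H k a b"
    and "\<And>k. db F k a b = u * db G k a b + v * db H k a b"
  shows "poisson N F K a b = u * poisson N G K a b + v * poisson N H K a b"
proof -
  define T1 where "T1 F' k = - a k / 4 * (db F' k a b * da K k a b - da F' k a b * db K k a b)" for F' k
  define T2 where
    "T2 F' k = a (k-1) / 4 * (db F' k a b * da K (k-1) a b - da F' (k-1) a b * db K k a b)" for F' k
  have poisson: "poisson N F' K a b = sum (T1 F') {1..N-1} + sum (T2 F') {2..N}" for F'
    unfolding poisson_def T1_def T2_def ..
  have "T1 F k = u * T1 G k + v * T1 H k" "T2 F k = u * T2 G k + v * T2 H k" for k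
    unfolding T1_def T2_def assms by (simp_all add: algebra_simps)
  then show ?thesis
    unfolding poisson by (simp add: sum.distrib sum_distrib_left algebra_simps)
qed

lemma poisson_right_lincomb:
  assumes "\<And>k. da F k a b = u * da G k a b + v * da H k a b"
    and "\<And>k. db F k a b = u * db G k a b + v * db H k a b"
  shows "poisson N K F a b = u * poisson N K G a b + v * poisson N K H a b"
  using poisson_left_lincomb [OF assms, of N K] poisson_antisym [of N K] by simp

lemma poisson_const_left [simp]: "poisson N (\<lambda>a b. c) G a b = 0"
  by (simp add: poisson_def)

lemma poisson_diff_left:
  assumes "partially_differentiable F" "partially_differentiable G"
  shows "poisson N (\<lambda>a b. F a b - G a b) H a b = poisson N F H a b - poisson N G H a b"
  using poisson_left_lincomb [of "\<lambda>a b. F a b - G a b" a b 1 F "-1" G N H] assms by simp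

lemma poisson_mult_left:
  assumes "partially_differentiable F" "partially_differentiable G"
  shows "poisson N (\<lambda>a b. F a b * G a b) H a b = G a b * poisson N F H a b + F a b * poisson N G H a b"
  using poisson_left_lincomb [of "\<lambda>a b. F a b * G a b" a b "G a b" F "F a b" G N H] assms
  by (simp add: mult.commute)

lemma poisson_minus_right:
  assumes "partially_differentiable G"
  shows "poisson N F (\<lambda>a b. - G a b) a b = - poisson N F G a b"
  using poisson_right_lincomb [of "\<lambda>a b. - G a b" a b "-1" G 0 G N F] assms by simp

lemma poisson_divide_right:
  assumes "partially_differentiable G" "partially_differentiable H" "H a b \<noteq> 0"
  shows "poisson N F (\<lambda>a b. G a b / H a b) a b =
    (H a b * poisson N F G a b - G a b * poisson N F H a b) / (H a b)\<^sup>2"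
proof -
  have nonzero: "H (a(k := a k)) b \<noteq> 0" "H a (b(k := b k)) \<noteq> 0" for k
    using assms(3) by simp_all
  have "((\<lambda>t. G (a(k := t)) b / H (a(k := t)) b) has_real_derivative
      (da G k a b * H a b - G a b * da H k a b) / (H a b * H a b)) (at (a k))" for k
    using DERIV_divide [OF has_real_derivative_da [OF assms(1), of a k b]
        has_real_derivative_da [OF assms(2), of a k b] nonzero(1)]
    by (simp only: fun_upd_triv)
  then have "da (\<lambda>a b. G a b / H a b) k a b =
      (da G k a b * H a b - G a b * da H k a b) / (H a b * H a b)" for k
    unfolding da_def by (rule DERIV_imp_deriv)
  moreover have "((\<lambda>t. G a (b(k := t)) / H a (b(k := t))) has_real_derivative
      (db G k a b * H a b - G a b * db H k a b) / (H a b * H a b)) (at (b k))" for k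
    using DERIV_divide [OF has_real_derivative_db [OF assms(1), of a b k]
        has_real_derivative_db [OF assms(2), of a b k] nonzero(2)]
    by (simp only: fun_upd_triv)
  then have "db (\<lambda>a b. G a b / H a b) k a b =
      (db G k a b * H a b - G a b * db H k a b) / (H a b * H a b)" for k
    unfolding db_def by (rule DERIV_imp_deriv)
  ultimately have "poisson N F (\<lambda>a b. G a b / H a b) a b =
      1 / H a b * poisson N F G a b + (- G a b / (H a b)\<^sup>2) * poisson N F H a b"
    using assms(3) by (intro poisson_right_lincomb) (simp_all add: field_simps power2_eq_square)
  then show ?thesis
    using assms(3) by (simp add: field_simps power2_eq_square)
qed

lemma poisson_coord_a:
  assumes "1 \<le> j" "j < N"
  shows "poisson N (\<lambda>a b. a j) G a b = a j / 4 * (db G j a b - db G (Suc j) a b)"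
proof -
  let ?A = "\<lambda>a b. a j"
  have "(\<Sum>k=1..N-1. - a k / 4 * (db ?A k a b * da G k a b - da ?A k a b * db G k a b))
      = (\<Sum>k=1..N-1. if k = j then a j / 4 * db G j a b else 0)"
    by (rule sum.cong) auto
  also have "\<dots> = a j / 4 * db G j a b"
    using assms by simp
  finally have first: "(\<Sum>k=1..N-1. - a k / 4 * (db ?A k a b * da G k a b - da ?A k a b * db G k a b))
      = a j / 4 * db G j a b" .
  have "(\<Sum>k=2..N. a (k-1) / 4 * (db ?A k a b * da G (k-1) a b - da ?A (k-1) a b * db G k a b))
      = (\<Sum>k=2..N. if k = Suc j then - a j / 4 * db G (Suc j) a b else 0)"
    by (rule sum.cong) auto
  also have "\<dots> = - a j / 4 * db G (Suc j) a b"
    using assms by simp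
  finally show ?thesis
    unfolding poisson_def first by (simp add: algebra_simps)
qed

lemma poisson_coord_b_eq_0:
  assumes "\<And>k. k \<le> j \<Longrightarrow> da G k a b = 0"
  shows "poisson N (\<lambda>a b. b j) G a b = 0"
  unfolding poisson_def by (subst (1 2) sum.neutral) (auto simp: assms)

definition charpoly_obs :: "nat \<Rightarrow> nat \<Rightarrow> real \<Rightarrow> observable" where
  "charpoly_obs s n x = (\<lambda>a b. charpoly_at a b s n x)"

lemma charpoly_obs_above: "n < s \<Longrightarrow> charpoly_obs s n x = (\<lambda>a b. 1)"
  by (simp add: charpoly_obs_def charpoly_at_above)

lemma charpoly_obs_diag: "charpoly_obs n n x = (\<lambda>a b. x - b n)"
  by (simp add: charpoly_obs_def charpoly_at_diag)

lemma charpoly_obs_rec: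
  "s < n \<Longrightarrow> charpoly_obs s n x =
     (\<lambda>a b. (x - b s) * charpoly_obs (Suc s) n x a b - a s * a s * charpoly_obs (Suc (Suc s)) n x a b)"
  by (simp add: charpoly_obs_def charpoly_at_rec)

lemma partially_differentiable_charpoly_obs [simp]: "partially_differentiable (charpoly_obs s n x)"
proof (induction "n - s" arbitrary: s rule: less_induct)
  case less
  consider "n < s" | "s = n" | "s < n" by linarith
  then show ?case
  proof cases
    case 3
    then show ?thesis using less by (simp add: charpoly_obs_rec)
  qed (simp_all add: charpoly_obs_above charpoly_obs_diag)
qed

lemma da_charpoly_obs_below: "k < s \<Longrightarrow> da (charpoly_obs s n x) k a b = 0"
  unfolding da_def charpoly_obs_def by (subst charpoly_at_cong [where a' = a and b' = b]) auto

lemma db_charpoly_obs_below: "k < s \<Longrightarrow> db (charpoly_obs s n x) k a b = 0"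
  unfolding db_def charpoly_obs_def by (subst charpoly_at_cong [where a' = a and b' = b]) auto

lemma db_charpoly_obs_first:
  "s \<le> n \<Longrightarrow> db (charpoly_obs s n x) s a b = - charpoly_obs (Suc s) n x a b"
  by (cases "s = n")
    (simp_all add: charpoly_obs_diag charpoly_obs_above charpoly_obs_rec db_charpoly_obs_below)

lemma poisson_charpoly_obs_left:
  assumes "s < n"
  shows "poisson N (charpoly_obs s n x) G a b =
      (x - b s) * poisson N (charpoly_obs (Suc s) n x) G a b
    - charpoly_obs (Suc s) n x a b * poisson N (\<lambda>a b. b s) G a b
    - 2 * a s * charpoly_obs (Suc (Suc s)) n x a b * poisson N (\<lambda>a b. a s) G a b
    - a s * a s * poisson N (charpoly_obs (Suc (Suc s)) n x) G a b"
  by (subst charpoly_obs_rec [OF assms])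
    (simp add: poisson_diff_left poisson_mult_left; simp add: algebra_simps)

lemma poisson_charpoly_obs_right:
  assumes "s < n"
  shows "poisson N G (charpoly_obs s n y) a b =
      (y - b s) * poisson N G (charpoly_obs (Suc s) n y) a b
    - charpoly_obs (Suc s) n y a b * poisson N G (\<lambda>a b. b s) a b
    - 2 * a s * charpoly_obs (Suc (Suc s)) n y a b * poisson N G (\<lambda>a b. a s) a b
    - a s * a s * poisson N G (charpoly_obs (Suc (Suc s)) n y) a b"
  using poisson_charpoly_obs_left [OF assms, of N y G a b]
  by (simp add: poisson_antisym [of N _ G])

lemma poisson_charpoly_obs_step:
  assumes "1 \<le> s" "s < n" "n \<le> N"
    and P_comm: "\<And>x y. poisson N (charpoly_obs (Suc s) n x) (charpoly_obs (Suc s) n y) a b = 0"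
    and Q_comm: "\<And>x y. poisson N (charpoly_obs (Suc (Suc s)) n x) (charpoly_obs (Suc (Suc s)) n y) a b = 0"
    and PQ: "\<And>x y. x \<noteq> y \<Longrightarrow>
      poisson N (charpoly_obs (Suc s) n x) (charpoly_obs (Suc (Suc s)) n y) a b =
        1/2 * (charpoly_obs (Suc (Suc s)) n x a b * charpoly_obs (Suc (Suc s)) n y a b
          + (charpoly_obs (Suc (Suc s)) n x a b * charpoly_obs (Suc s) n y a b
             - charpoly_obs (Suc s) n x a b * charpoly_obs (Suc (Suc s)) n y a b) / (x - y))"
  shows "poisson N (charpoly_obs s n x) (charpoly_obs s n y) a b = 0"
    and "x \<noteq> y \<Longrightarrow>
      poisson N (charpoly_obs s n x) (charpoly_obs (Suc s) n y) a b =
        1/2 * (charpoly_obs (Suc s) n x a b * charpoly_obs (Suc s) n y a b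
          + (charpoly_obs (Suc s) n x a b * charpoly_obs s n y a b
             - charpoly_obs s n x a b * charpoly_obs (Suc s) n y a b) / (x - y))"
proof -
  let ?P = "charpoly_obs (Suc s) n" and ?Q = "charpoly_obs (Suc (Suc s)) n"
  let ?\<alpha> = "\<lambda>a b. a s" and ?\<beta> = "\<lambda>a b. b s"
  have C_val: "charpoly_obs s n x a b = (x - b s) * ?P x a b - a s * a s * ?Q x a b" for x
    by (simp add: charpoly_obs_rec [OF assms(2)])
  have \<beta>_P: "poisson N ?\<beta> (?P y) a b = 0" and \<beta>_Q: "poisson N ?\<beta> (?Q y) a b = 0" for y
    by (rule poisson_coord_b_eq_0, simp add: da_charpoly_obs_below)+
  have \<alpha>_P: "poisson N ?\<alpha> (?P y) a b = a s / 4 * ?Q y a b"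
    and \<alpha>_Q: "poisson N ?\<alpha> (?Q y) a b = 0" for y
    using assms(1-3) by (simp_all add: poisson_coord_a db_charpoly_obs_below db_charpoly_obs_first)
  have \<alpha>_\<beta>: "poisson N ?\<alpha> ?\<beta> a b = a s / 4"
    using assms(1-3) by (simp add: poisson_coord_a)
  have P_\<beta>: "poisson N (?P x) ?\<beta> a b = 0" and Q_\<beta>: "poisson N (?Q x) ?\<beta> a b = 0"
    and P_\<alpha>: "poisson N (?P x) ?\<alpha> a b = - (a s / 4 * ?Q x a b)"
    and Q_\<alpha>: "poisson N (?Q x) ?\<alpha> a b = 0"
    and \<beta>_\<alpha>: "poisson N ?\<beta> ?\<alpha> a b = - (a s / 4)" for x
    by (subst poisson_antisym, simp add: \<beta>_P \<beta>_Q \<alpha>_P \<alpha>_Q \<alpha>_\<beta>)+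
  have QP: "poisson N (?Q x) (?P y) a b = - poisson N (?P y) (?Q x) a b" for x y
    by (rule poisson_antisym)
  note table = P_comm Q_comm poisson_self QP
    \<beta>_P \<beta>_Q \<alpha>_P \<alpha>_Q \<alpha>_\<beta> P_\<beta> Q_\<beta> P_\<alpha> Q_\<alpha> \<beta>_\<alpha>
  show "poisson N (charpoly_obs s n x) (?P y) a b =
        1/2 * (?P x a b * ?P y a b + (?P x a b * charpoly_obs s n y a b
          - charpoly_obs s n x a b * ?P y a b) / (x - y))" if "x \<noteq> y" for x y
    using that unfolding poisson_charpoly_obs_left [OF assms(2)] C_val
    by (simp add: table PQ [of y x]) (simp add: field_simps)
  show "poisson N (charpoly_obs s n x) (charpoly_obs s n y) a b = 0"
  proof (cases "x = y")
    case False
    then show ?thesis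
      unfolding poisson_charpoly_obs_left [OF assms(2)] poisson_charpoly_obs_right [OF assms(2)]
      by (simp add: table PQ [of x y] PQ [of y x]) (simp add: field_simps)
  qed (simp add: poisson_self)
qed

lemma poisson_charpoly_obs_brackets:
  assumes "1 \<le> s" "s \<le> n" "n \<le> N"
  shows "(\<forall>x y. poisson N (charpoly_obs s n x) (charpoly_obs s n y) a b = 0)
    \<and> (\<forall>x y. poisson N (charpoly_obs (Suc s) n x) (charpoly_obs (Suc s) n y) a b = 0)
    \<and> (\<forall>x y. x \<noteq> y \<longrightarrow>
        poisson N (charpoly_obs s n x) (charpoly_obs (Suc s) n y) a b =
          1/2 * (charpoly_obs (Suc s) n x a b * charpoly_obs (Suc s) n y a b
            + (charpoly_obs (Suc s) n x a b * charpoly_obs s n y a b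
               - charpoly_obs s n x a b * charpoly_obs (Suc s) n y a b) / (x - y)))"
  using assms(2,1)
proof (induction rule: inc_induct)
  case base
  have "poisson N (\<lambda>a b. x - b n) (\<lambda>a b. y - b n) a b = 0" for x y
    by (simp add: poisson_diff_left poisson_coord_b_eq_0)
  moreover have "poisson N G (\<lambda>a b. 1) a b = 0" for G
    using poisson_antisym [of N G "\<lambda>a b. 1" a b] by simp
  ultimately show ?case
    by (simp add: charpoly_obs_diag charpoly_obs_above field_simps)
next
  case (step s)
  then show ?case
    using poisson_charpoly_obs_step [of s n N a b] assms(3) by auto
qed

lemma poisson_Pn_Qn:
  assumes "1 \<le> n" "n \<le> N"
  shows "poisson N (\<lambda>a' b'. Pn n a' b' x) (\<lambda>a' b'. Pn n a' b' y) a b = 0"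
    and "poisson N (\<lambda>a' b'. Qn n a' b' x) (\<lambda>a' b'. Qn n a' b' y) a b = 0"
    and "x \<noteq> y \<Longrightarrow> poisson N (\<lambda>a' b'. Pn n a' b' x) (\<lambda>a' b'. Qn n a' b' y) a b =
      1/2 * (Qn n a b x * Qn n a b y + (Qn n a b x * Pn n a b y - Pn n a b x * Qn n a b y) / (x - y))"
  using poisson_charpoly_obs_brackets [of 1 n N a b] assms
  by (simp_all add: Pn_def Qn_def charpoly_obs_def numeral_2_eq_2)

lemma poisson_mn_right:
  assumes "Pn n a b y \<noteq> 0"
  shows "poisson N F (\<lambda>a' b'. mn n a' b' y) a b =
    (Qn n a b y * poisson N F (\<lambda>a' b'. Pn n a' b' y) a b
      - Pn n a b y * poisson N F (\<lambda>a' b'. Qn n a' b' y) a b) / (Pn n a b y)\<^sup>2"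
proof -
  have Qn: "partially_differentiable (\<lambda>a' b'. Qn n a' b' y)"
    using partially_differentiable_charpoly_obs [of 2 n y] by (simp add: Qn_def charpoly_obs_def)
  have "poisson N F (\<lambda>a' b'. - Qn n a' b' y / Pn n a' b' y) a b =
    (Pn n a b y * poisson N F (\<lambda>a' b'. - Qn n a' b' y) a b
      - (- Qn n a b y) * poisson N F (\<lambda>a' b'. Pn n a' b' y) a b) / (Pn n a b y)\<^sup>2"
    using assms partially_differentiable_charpoly_obs [of 1 n y] Qn
    by (intro poisson_divide_right) (simp_all add: Pn_def charpoly_obs_def)
  then show ?thesis
    unfolding mn_def by (simp add: poisson_minus_right [OF Qn])
qed

theorem theorem12p1:
  fixes N n :: nat and c x y :: real and a b :: "nat \<Rightarrow> real"
  assumes "N \<ge> 1"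
    and "\<And>k. 1 \<le> k \<Longrightarrow> k \<le> N - 1 \<Longrightarrow> a k > 0"
    and "(\<Sum>j=1..N. b j) = c"
    and "1 \<le> n" and "n \<le> N"
    and "Pn n a b y \<noteq> 0"
    and "x \<noteq> y"
  shows "(poisson N (\<lambda>a' b'. Pn n a' b' x) (\<lambda>a' b'. mn n a' b' y) a b
           = 1/2 * (Qn n a b x * mn n a b y
                    - (Pn n a b x * mn n a b y + Qn n a b x) / (x - y)))
     \<and> (poisson N (\<lambda>a' b'. Qn n a' b' x) (\<lambda>a' b'. mn n a' b' y) a b
           = 1/2 * (- Qn n a b x * (mn n a b y)^2
                    + mn n a b y * (Pn n a b x * mn n a b y + Qn n a b x) / (x - y)))"
proof -
  have "x - y \<noteq> 0" "y - x \<noteq> 0" "y \<noteq> x"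
    using assms(7) by auto
  then show ?thesis
    unfolding poisson_mn_right [OF assms(6)]
      poisson_antisym [of N "\<lambda>a' b'. Qn n a' b' x" "\<lambda>a' b'. Pn n a' b' y"]
      poisson_Pn_Qn [OF assms(4,5)] poisson_Pn_Qn(3) [OF assms(4,5) assms(7)]
      poisson_Pn_Qn(3) [OF assms(4,5) \<open>y \<noteq> x\<close>]
    using assms(6) by (simp add: mn_def field_simps power2_eq_square)
qed

end
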